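(* Let $v\in C^1(\mathbb{R}^2)$ be a classical solution of the stationary Euler equations on $\mathbb{R}^2$. Suppose there is a bounded region $\Omega\subset\mathbb{R}^2$ with $C^1$ boundary, whose boundary consists of $J\ge1$ connected components, such that $v=\nabla^\perp\bar\psi$ in $\Omega$ and $v=0$ in $\mathbb{R}^2\setminus\Omega$, where $\bar\psi\in C^2(\overline\Omega)$ solves $\Delta\bar\psi+f(\bar\psi)=0$ in $\Omega$ for some $f\in C(\mathbb{R})$. Then $v=\nabla^\perp\psi$ for some $\psi\in C^2(\mathbb{R}^2)$ which satisfies $\Delta\psi+f(\psi)=0$ in all of $\mathbb{R}^2$.
   Context: The stationary Euler equations on $\mathbb{R}^2$: $v\cdot\nabla v+\nabla p=0$ and $\operatorname{div}v=0$ for some pressure $p$. $\nabla^\perp\psi:=(\partial_{x_2}\psi,-\partial_{x_1}\psi)$. *)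

theory Defs
  imports "HOL-Analysis.Analysis"
begin

definition pd1 :: "(real \<times> real \<Rightarrow> real) \<Rightarrow> real \<times> real \<Rightarrow> real" where
  "pd1 g x = frechet_derivative g (at x) (1, 0)"

definition pd2 :: "(real \<times> real \<Rightarrow> real) \<Rightarrow> real \<times> real \<Rightarrow> real" where
  "pd2 g x = frechet_derivative g (at x) (0, 1)"

definition C1_on :: "(real \<times> real) set \<Rightarrow> (real \<times> real \<Rightarrow> real) \<Rightarrow> bool" where
  "C1_on S g \<longleftrightarrow> (\<forall>x\<in>S. g differentiable (at x))
      \<and> continuous_on S (pd1 g) \<and> continuous_on S (pd2 g)"

definition C2_on :: "(real \<times> real) set \<Rightarrow> (real \<times> real \<Rightarrow> real) \<Rightarrow> bool" where
  "C2_on S g \<longleftrightarrow> C1_on S g \<and> C1_on S (pd1 g) \<and> C1_on S (pd2 g)"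

definition ext_closure :: "(real \<times> real) set \<Rightarrow> (real \<times> real \<Rightarrow> real) \<Rightarrow> bool" where
  "ext_closure S u \<longleftrightarrow> (\<exists>h. continuous_on (closure S) h \<and> (\<forall>x\<in>S. h x = u x))"

definition C2_closure :: "(real \<times> real) set \<Rightarrow> (real \<times> real \<Rightarrow> real) \<Rightarrow> bool" where
  "C2_closure S g \<longleftrightarrow> C2_on S g \<and>
     ext_closure S g \<and> ext_closure S (pd1 g) \<and> ext_closure S (pd2 g) \<and>
     ext_closure S (pd1 (pd1 g)) \<and> ext_closure S (pd2 (pd1 g)) \<and>
     ext_closure S (pd1 (pd2 g)) \<and> ext_closure S (pd2 (pd2 g))"

definition laplacian :: "(real \<times> real \<Rightarrow> real) \<Rightarrow> real \<times> real \<Rightarrow> real" where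
  "laplacian g x = pd1 (pd1 g) x + pd2 (pd2 g) x"

definition grad_perp :: "(real \<times> real \<Rightarrow> real) \<Rightarrow> real \<times> real \<Rightarrow> real \<times> real" where
  "grad_perp g x = (pd2 g x, - pd1 g x)"

definition stationary_euler :: "(real \<times> real \<Rightarrow> real \<times> real) \<Rightarrow> bool" where
  "stationary_euler v \<longleftrightarrow>
     C1_on UNIV (\<lambda>x. fst (v x)) \<and> C1_on UNIV (\<lambda>x. snd (v x)) \<and>
     (\<exists>p. C1_on UNIV p \<and>
       (\<forall>x. fst (v x) * pd1 (\<lambda>y. fst (v y)) x + snd (v x) * pd2 (\<lambda>y. fst (v y)) x + pd1 p x = 0
          \<and> fst (v x) * pd1 (\<lambda>y. snd (v y)) x + snd (v x) * pd2 (\<lambda>y. snd (v y)) x + pd2 p x = 0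
          \<and> pd1 (\<lambda>y. fst (v y)) x + pd2 (\<lambda>y. snd (v y)) x = 0))"

text \<open>Open set with C^1 boundary: near every boundary point, after a rigid rotation of
  coordinates centred at the point, the set is the region below the graph of a C^1 function.\<close>
definition C1_boundary :: "(real \<times> real) set \<Rightarrow> bool" where
  "C1_boundary \<Omega> \<longleftrightarrow> (\<forall>p\<in>frontier \<Omega>. \<exists>r>0. \<exists>\<theta>::real. \<exists>h::real \<Rightarrow> real.
      h C1_differentiable_on UNIV \<and>
      \<Omega> \<inter> ball p r = {x \<in> ball p r.
         - sin \<theta> * (fst x - fst p) + cos \<theta> * (snd x - snd p)
           < h (cos \<theta> * (fst x - fst p) + sin \<theta> * (snd x - snd p))})"

end

theory Submission
  imports Defs
begin

(* Since v is divergence free and vanishes outside the bounded set Omega, integrating its first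
   component along vertical lines, starting below the support, gives a global stream function psi
   with grad_perp psi = v; on the connected set Omega it differs from the given stream function by a
   constant, which we subtract. Then psi is C^2 because v is C^1, and psi is locally constant off
   Omega. Hence G = Delta psi + f(psi) is continuous, vanishes on Omega and so on its closure, and is
   constant on each component U of the exterior of the closure; as U has a frontier point in the
   closure, that constant is 0. *)

lemma has_derivative_pd:
  assumes "g differentiable (at x)"
  shows "(g has_derivative (\<lambda>h. fst h * pd1 g x + snd h * pd2 g x)) (at x)"
proof -
  let ?D = "frechet_derivative g (at x)"
  have D: "(g has_derivative ?D) (at x)"
    using assms by (simp add: frechet_derivative_works)
  then have lin: "linear ?D" by (rule has_derivative_linear)
  have "?D = (\<lambda>h. fst h * pd1 g x + snd h * pd2 g x)"
  proof
    fix h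
    have "?D h = ?D (fst h *\<^sub>R (1, 0) + snd h *\<^sub>R (0, 1))" by (cases h) simp
    also have "\<dots> = fst h * ?D (1, 0) + snd h * ?D (0, 1)"
      by (simp only: linear_add[OF lin] linear_scale[OF lin] real_scaleR_def)
    finally show "?D h = fst h * pd1 g x + snd h * pd2 g x" by (simp add: pd1_def pd2_def)
  qed
  with D show ?thesis by simp
qed

lemma pd_eq_of_has_derivative:
  assumes "(g has_derivative (\<lambda>h. fst h * a + snd h * b)) (at x)"
  shows "pd1 g x = a" "pd2 g x = b"
  using frechet_derivative_at[OF assms, symmetric] by (auto simp: pd1_def pd2_def)

lemma pd_const: "pd1 (\<lambda>_. c) = (\<lambda>_. 0)" "pd2 (\<lambda>_. c) = (\<lambda>_. 0)"
  by (rule ext, rule pd_eq_of_has_derivative[of _ 0 0], simp)+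

lemma pd_uminus:
  assumes "g differentiable (at x)"
  shows "pd1 (\<lambda>y. - g y) x = - pd1 g x" "pd2 (\<lambda>y. - g y) x = - pd2 g x"
proof -
  have "((\<lambda>y. - g y) has_derivative (\<lambda>h. fst h * - pd1 g x + snd h * - pd2 g x)) (at x)"
    using has_derivative_minus[OF has_derivative_pd[OF assms]] by (simp add: algebra_simps)
  then show "pd1 (\<lambda>y. - g y) x = - pd1 g x" "pd2 (\<lambda>y. - g y) x = - pd2 g x"
    by (rule pd_eq_of_has_derivative)+
qed

lemma pd_cong_open:
  assumes "open S" "x \<in> S" "\<And>y. y \<in> S \<Longrightarrow> g y = h y"
  shows "pd1 g x = pd1 h x" "pd2 g x = pd2 h x"
proof -
  have "(g has_derivative D) (at x) \<longleftrightarrow> (h has_derivative D) (at x)" for D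
    using has_derivative_transform_within_open[OF _ assms(1,2)] assms(3) by metis
  then have "frechet_derivative g (at x) = frechet_derivative h (at x)"
    by (simp add: frechet_derivative_def)
  then show "pd1 g x = pd1 h x" "pd2 g x = pd2 h x" by (simp_all add: pd1_def pd2_def)
qed

lemma laplacian_cong_open:
  assumes "open S" "x \<in> S" "\<And>y. y \<in> S \<Longrightarrow> g y = h y"
  shows "laplacian g x = laplacian h x"
proof -
  have "pd1 g y = pd1 h y" "pd2 g y = pd2 h y" if "y \<in> S" for y
    using pd_cong_open[OF assms(1) that assms(3)] by simp_all
  then have "pd1 (pd1 g) x = pd1 (pd1 h) x" "pd2 (pd2 g) x = pd2 (pd2 h) x"
    using pd_cong_open[OF assms(1,2)] by blast+
  then show ?thesis by (simp add: laplacian_def)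
qed

lemma has_real_derivative_pd1:
  assumes "g differentiable (at (s, t))"
  shows "((\<lambda>s. g (s, t)) has_real_derivative pd1 g (s, t)) (at s)"
proof -
  have "((\<lambda>s. (s, t)) has_derivative (\<lambda>h. (h, 0))) (at s)"
    by (auto intro!: derivative_eq_intros)
  from has_derivative_compose[OF this has_derivative_pd[OF assms]] show ?thesis
    by (simp add: has_field_derivative_def mult_commute_abs)
qed

lemma has_real_derivative_pd2:
  assumes "g differentiable (at (s, t))"
  shows "((\<lambda>t. g (s, t)) has_real_derivative pd2 g (s, t)) (at t)"
proof -
  have "((\<lambda>t. (s, t)) has_derivative (\<lambda>h. (0, h))) (at t)"
    by (auto intro!: derivative_eq_intros)
  from has_derivative_compose[OF this has_derivative_pd[OF assms]] show ?thesis
    by (simp add: has_field_derivative_def mult_commute_abs)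
qed

lemma C1_on_uminus:
  assumes "C1_on S g"
  shows "C1_on S (\<lambda>x. - g x)"
proof -
  have pd: "pd1 (\<lambda>y. - g y) x = - pd1 g x" "pd2 (\<lambda>y. - g y) x = - pd2 g x" if "x \<in> S" for x
    using assms that pd_uminus by (auto simp: C1_on_def)
  have "continuous_on S (\<lambda>x. - pd1 g x)" "continuous_on S (\<lambda>x. - pd2 g x)"
    using assms by (auto simp: C1_on_def intro: continuous_on_minus)
  then have "continuous_on S (pd1 (\<lambda>y. - g y))" "continuous_on S (pd2 (\<lambda>y. - g y))"
    by (simp_all only: continuous_on_cong[OF refl pd(1)] continuous_on_cong[OF refl pd(2)])
  with assms show ?thesis by (simp add: C1_on_def)
qed

lemma continuous_on_laplacian:
  assumes "C2_on S g"
  shows "continuous_on S (laplacian g)"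
  using assms unfolding C2_on_def C1_on_def laplacian_def by (intro continuous_on_add) auto

lemma laplacian_const: "laplacian (\<lambda>_. c) x = 0"
  by (simp add: laplacian_def pd_const)

lemma C2_on_UNIV_of_C1_gradient:
  assumes D: "\<And>x. (\<psi> has_derivative (\<lambda>h. fst h * a x + snd h * b x)) (at x)"
    and C1: "C1_on UNIV a" "C1_on UNIV b"
  shows "C2_on UNIV \<psi>"
proof -
  have "pd1 \<psi> = a" "pd2 \<psi> = b"
    using pd_eq_of_has_derivative[OF D] by auto
  moreover have "continuous_on UNIV a" "continuous_on UNIV b"
    using C1 unfolding C1_on_def
    by (metis continuous_at_imp_continuous_on differentiable_imp_continuous_within)+
  ultimately show ?thesis
    using D C1 by (auto simp: C2_on_def C1_on_def intro: differentiableI)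
qed

lemma has_real_derivative_integral_upper:
  fixes g :: "real \<Rightarrow> real"
  assumes cont: "continuous_on UNIV g" and vanish: "\<And>t. t \<le> b \<Longrightarrow> g t = 0" and "a < b"
  shows "((\<lambda>y. integral {a..y} g) has_real_derivative g y) (at y)"
proof (cases "y < b")
  case True
  have "integral {a..z} g = 0" if "z < b" for z
  proof -
    have "integral {a..z} g = integral {a..z} (\<lambda>_. 0)"
      using that vanish by (intro integral_cong) simp
    then show ?thesis by simp
  qed
  then have "((\<lambda>y. integral {a..y} g) has_real_derivative 0) (at y)"
    using has_field_derivative_transform_within_open[of "\<lambda>_. 0" 0 y "{..<b}"] True by simp
  with True vanish show ?thesis by simp
next
  case False
  have "((\<lambda>y. integral {a..y} g) has_real_derivative g y) (at y within {a..y + 1})"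
    using False \<open>a < b\<close> by (intro integral_has_real_derivative continuous_on_subset[OF cont]) auto
  then have "((\<lambda>y. integral {a..y} g) has_real_derivative g y) (at y within {a<..<y + 1})"
    by (rule DERIV_subset) auto
  moreover have "at y within {a<..<y + 1} = at y"
    using False \<open>a < b\<close> by (intro at_within_open) auto
  ultimately show ?thesis by simp
qed

lemma has_real_derivative_integral_pd1:
  assumes diff: "\<And>x. g differentiable (at x)" and cont: "continuous_on UNIV (pd1 g)"
  shows "((\<lambda>s. integral {a..b} (\<lambda>t. g (s, t))) has_real_derivative
           integral {a..b} (\<lambda>t. pd1 g (s, t))) (at s)"
proof -
  have "continuous_on UNIV g"
    using diff differentiable_imp_continuous_within continuous_at_imp_continuous_on by blast
  then have "continuous_on {a..b} (\<lambda>t. g (s', t))" for s'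
    by (rule continuous_on_compose2[OF _ continuous_on_Pair[OF continuous_on_const continuous_on_id]]) auto
  then have "(\<lambda>t. g (s', t)) integrable_on cbox a b" for s'
    by (simp add: cbox_interval integrable_continuous_interval)
  moreover have "continuous_on (UNIV \<times> cbox a b) (\<lambda>(s, t). pd1 g (s, t))"
    using continuous_on_subset[OF cont] by (simp add: case_prod_eta)
  ultimately have "((\<lambda>s. integral (cbox a b) (\<lambda>t. g (s, t))) has_real_derivative
           integral (cbox a b) (\<lambda>t. pd1 g (s, t))) (at s within UNIV)"
    using has_real_derivative_pd1[OF diff] by (intro leibniz_rule_field_derivative) auto
  then show ?thesis by (simp add: cbox_interval)
qed

lemma integral_pd1_eq_of_divergence_free:
  assumes diff: "\<And>x. g2 differentiable (at x)" and div: "\<And>x. pd1 g1 x + pd2 g2 x = 0"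
    and "g2 (s, a) = 0" "a \<le> y"
  shows "integral {a..y} (\<lambda>t. pd1 g1 (s, t)) = - g2 (s, y)"
proof -
  have "((\<lambda>t. pd2 g2 (s, t)) has_integral g2 (s, y) - g2 (s, a)) {a..y}"
    using \<open>a \<le> y\<close> by (intro fundamental_theorem_of_calculus)
      (auto intro!: has_field_derivative_at_within has_real_derivative_pd2 diff
        simp: has_real_derivative_iff_has_vector_derivative[symmetric])
  moreover have "pd2 g2 (s, t) = - pd1 g1 (s, t)" for t
    using div[of "(s, t)"] by linarith
  ultimately have "((\<lambda>t. - pd1 g1 (s, t)) has_integral g2 (s, y)) {a..y}"
    using \<open>g2 (s, a) = 0\<close> by simp
  from has_integral_neg[OF this]
  have "((\<lambda>t. pd1 g1 (s, t)) has_integral - g2 (s, y)) {a..y}"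
    by simp
  then show ?thesis by (rule integral_unique)
qed

lemma has_derivative_of_partials:
  fixes F :: "real \<times> real \<Rightarrow> real"
  assumes A: "\<And>s t. ((\<lambda>s. F (s, t)) has_real_derivative A (s, t)) (at s)"
    and B: "\<And>s t. ((\<lambda>t. F (s, t)) has_real_derivative B (s, t)) (at t)"
    and cont: "continuous_on UNIV B"
  shows "(F has_derivative (\<lambda>h. fst h * A z + snd h * B z)) (at z)"
proof (cases z)
  case (Pair s t)
  have "((\<lambda>(s, t). F (s, t)) has_derivative
          (\<lambda>(hs, ht). hs * A (s, t) + blinfun_mult_right (B (s, t)) ht)) (at (s, t) within UNIV \<times> UNIV)"
  proof (rule has_derivative_partialsI)
    show "((\<lambda>s. F (s, t)) has_derivative (\<lambda>hs. hs * A (s, t))) (at s within UNIV)"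
      using A by (simp add: has_field_derivative_def mult_commute_abs)
    show "((\<lambda>t. F (s', t)) has_derivative blinfun_mult_right (B (s', t'))) (at t' within UNIV)" for s' t'
      using B by (simp add: has_field_derivative_def mult_commute_abs)
    have "isCont B (s, t)"
      using cont by (simp add: continuous_on_eq_continuous_at)
    then have "isCont (\<lambda>z. blinfun_mult_right (B z)) (s, t)"
      by (rule bounded_linear.continuous[OF bounded_linear_blinfun_mult_right])
    moreover have "(\<lambda>(s, t). blinfun_mult_right (B (s, t))) = (\<lambda>z. blinfun_mult_right (B z))"
      by auto
    ultimately show "continuous (at (s, t) within UNIV \<times> UNIV) (\<lambda>(s, t). blinfun_mult_right (B (s, t)))"
      by simp
  qed auto
  with Pair show ?thesis by (simp add: case_prod_eta split_def mult.commute)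
qed

lemma divergence_free_has_stream_function:
  fixes g1 g2 :: "real \<times> real \<Rightarrow> real"
  assumes diff: "\<And>x. g1 differentiable (at x)" "\<And>x. g2 differentiable (at x)"
    and cont: "continuous_on UNIV (pd1 g1)"
    and div: "\<And>x. pd1 g1 x + pd2 g2 x = 0"
    and supp: "\<And>x. R \<le> norm x \<Longrightarrow> g1 x = 0 \<and> g2 x = 0"
  obtains \<psi> where "\<And>x. (\<psi> has_derivative (\<lambda>h. fst h * - g2 x + snd h * g1 x)) (at x)"
proof -
  define b where "b = - \<bar>R\<bar>"
  have vanish: "g1 (s, t) = 0 \<and> g2 (s, t) = 0" if "t \<le> b" for s t
  proof -
    have "R \<le> norm t" using that by (simp add: b_def)
    also have "\<dots> \<le> norm (s, t)" by (rule norm_snd_le)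
    finally show ?thesis by (rule supp)
  qed
  define \<psi> where "\<psi> z = integral {b - 1..snd z} (\<lambda>t. g1 (fst z, t))" for z
  have "continuous_on UNIV g1"
    using diff(1) differentiable_imp_continuous_within continuous_at_imp_continuous_on by blast
  then have cont_slice: "continuous_on UNIV (\<lambda>t. g1 (s, t))" for s
    by (rule continuous_on_compose2[OF _ continuous_on_Pair[OF continuous_on_const continuous_on_id]]) auto
  have d1: "((\<lambda>s. \<psi> (s, t)) has_real_derivative - g2 (s, t)) (at s)" for s t
  proof (cases "b - 1 \<le> t")
    case True
    have "integral {b - 1..t} (\<lambda>t. pd1 g1 (s, t)) = - g2 (s, t)"
      using True vanish by (intro integral_pd1_eq_of_divergence_free[OF diff(2) div]) auto
    with has_real_derivative_integral_pd1[OF diff(1) cont, of "b - 1" t s] show ?thesis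
      by (simp add: \<psi>_def)
  next
    case False
    then have "(\<lambda>s. \<psi> (s, t)) = (\<lambda>_. 0)" "g2 (s, t) = 0"
      using vanish by (auto simp: \<psi>_def)
    then show ?thesis by simp
  qed
  have d2: "((\<lambda>t. \<psi> (s, t)) has_real_derivative g1 (s, t)) (at t)" for s t
  proof -
    have "((\<lambda>t. integral {b - 1..t} (\<lambda>t. g1 (s, t))) has_real_derivative g1 (s, t)) (at t)"
      using vanish by (intro has_real_derivative_integral_upper[OF cont_slice, where b = b]) auto
    then show ?thesis by (simp add: \<psi>_def)
  qed
  show ?thesis
    using that has_derivative_of_partials[of \<psi> "\<lambda>z. - g2 z" g1, OF d1 d2 \<open>continuous_on UNIV g1\<close>]
    by blast
qed

lemma has_derivative_eq_imp_diff_constant: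
  fixes f g :: "'a::euclidean_space \<Rightarrow> 'b::banach"
  assumes "open S" "connected S"
    and f: "\<And>x. x \<in> S \<Longrightarrow> (f has_derivative D x) (at x)"
    and g: "\<And>x. x \<in> S \<Longrightarrow> (g has_derivative D x) (at x)"
  obtains c where "\<And>x. x \<in> S \<Longrightarrow> f x - g x = c"
proof -
  have "(\<lambda>x. f x - g x) constant_on S"
  proof (rule has_derivative_zero_connected_constant_on[where K = "{}"])
    show "continuous_on S (\<lambda>x. f x - g x)"
      using f g has_derivative_continuous
      by (intro continuous_at_imp_continuous_on ballI continuous_intros) blast+
    show "\<forall>x\<in>S - {}. ((\<lambda>x. f x - g x) has_derivative (\<lambda>h. 0)) (at x within S)"
      using has_derivative_diff[OF f g] by (auto intro: has_derivative_at_withinI)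
  qed (use assms in auto)
  with that show ?thesis by (auto simp: constant_on_def)
qed

lemma divergence_free_stream_function_extension:
  fixes g1 g2 \<psi> :: "real \<times> real \<Rightarrow> real"
  assumes \<Omega>: "open \<Omega>" "connected \<Omega>" "bounded \<Omega>"
    and diff: "\<And>x. g1 differentiable (at x)" "\<And>x. g2 differentiable (at x)"
    and cont: "continuous_on UNIV (pd1 g1)"
    and div: "\<And>x. pd1 g1 x + pd2 g2 x = 0"
    and outside: "\<And>x. x \<notin> \<Omega> \<Longrightarrow> g1 x = 0 \<and> g2 x = 0"
    and \<psi>: "\<And>x. x \<in> \<Omega> \<Longrightarrow> (\<psi> has_derivative (\<lambda>h. fst h * - g2 x + snd h * g1 x)) (at x)"
  obtains \<Psi> where "\<And>x. (\<Psi> has_derivative (\<lambda>h. fst h * - g2 x + snd h * g1 x)) (at x)"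
    and "\<And>x. x \<in> \<Omega> \<Longrightarrow> \<Psi> x = \<psi> x"
proof -
  obtain R where "\<Omega> \<subseteq> ball 0 R"
    using bounded_subset_ballD[OF \<open>bounded \<Omega>\<close>] by blast
  then have "g1 x = 0 \<and> g2 x = 0" if "R \<le> norm x" for x
    using that by (intro outside) auto
  then obtain \<psi>0 where \<psi>0: "\<And>x. (\<psi>0 has_derivative (\<lambda>h. fst h * - g2 x + snd h * g1 x)) (at x)"
    using divergence_free_has_stream_function[OF diff cont div] by blast
  obtain c where c: "\<And>x. x \<in> \<Omega> \<Longrightarrow> \<psi>0 x - \<psi> x = c"
    using has_derivative_eq_imp_diff_constant[OF \<Omega>(1,2) \<psi>0 \<psi>] by blast
  show ?thesis
  proof (rule that)
    show "((\<lambda>x. \<psi>0 x - c) has_derivative (\<lambda>h. fst h * - g2 x + snd h * g1 x)) (at x)" for x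
      using has_derivative_diff[OF \<psi>0 has_derivative_const[of c]] by simp
    show "\<psi>0 x - c = \<psi> x" if "x \<in> \<Omega>" for x
      using c[OF that] by simp
  qed
qed

lemma continuous_constant_through_exterior_components:
  fixes G :: "'a::real_normed_vector \<Rightarrow> 'b::t1_space"
  assumes cont: "continuous_on UNIV G" and "S \<noteq> {}"
    and on_S: "\<And>x. x \<in> S \<Longrightarrow> G x = c"
    and exterior: "\<And>U. U \<in> components (- closure S) \<Longrightarrow> G constant_on U"
  shows "G x = c"
proof -
  have on_closure: "G y = c" if "y \<in> closure S" for y
    using continuous_constant_on_closure[OF continuous_on_subset[OF cont] on_S that] by simp
  show ?thesis
  proof (cases "x \<in> closure S")
    case False
    define U where "U = connected_component_set (- closure S) x"
    have "x \<in> U" using False by (simp add: U_def)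
    have "G constant_on U"
      using False by (intro exterior) (simp add: U_def componentsI)
    then have on_U: "G z = G x" if "z \<in> U" for z
      using \<open>x \<in> U\<close> that by (auto simp: constant_on_def)
    have "U \<noteq> UNIV"
      using \<open>S \<noteq> {}\<close> closure_subset[of S] connected_component_subset[of "- closure S" x]
      by (auto simp: U_def)
    then obtain y where y: "y \<in> frontier U"
      using frontier_not_empty \<open>x \<in> U\<close> by blast
    then have "y \<in> frontier (- closure S)"
      using frontier_of_connected_component_subset[of "- closure S" x] by (auto simp only: U_def)
    then have "y \<in> closure S"
      by (simp add: frontier_def interior_open[OF open_Compl[OF closed_closure]])
    moreover have "G y = G x"
      using y continuous_constant_on_closure[OF continuous_on_subset[OF cont] on_U]
      by (simp add: frontier_def)
    ultimately show ?thesis using on_closure by simp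
  qed (rule on_closure)
qed

lemma semilinear_equation_extends_to_stagnant_exterior:
  assumes C2: "C2_on UNIV \<psi>" and f: "continuous_on UNIV f" and "\<Omega> \<noteq> {}"
    and inside: "\<And>x. x \<in> \<Omega> \<Longrightarrow> laplacian \<psi> x + f (\<psi> x) = 0"
    and outside: "\<And>x. x \<notin> \<Omega> \<Longrightarrow> pd1 \<psi> x = 0 \<and> pd2 \<psi> x = 0"
  shows "laplacian \<psi> x + f (\<psi> x) = 0"
proof -
  have diff: "\<psi> differentiable (at z)" for z
    using C2 unfolding C2_on_def C1_on_def by blast
  then have cont: "continuous_on UNIV \<psi>"
    using differentiable_imp_continuous_within continuous_at_imp_continuous_on by blast
  with f have "continuous_on UNIV (\<lambda>x. laplacian \<psi> x + f (\<psi> x))"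
    by (intro continuous_on_add continuous_on_laplacian[OF C2] continuous_on_compose2[OF f]) auto
  moreover have "(\<lambda>x. laplacian \<psi> x + f (\<psi> x)) constant_on U"
    if U: "U \<in> components (- closure \<Omega>)" for U
  proof -
    have "open U" "connected U"
      using U by (auto intro: open_components[OF open_Compl[OF closed_closure]] in_components_connected)
    have "U \<subseteq> - \<Omega>"
      using in_components_subset[OF U] closure_subset by blast
    have "(\<psi> has_derivative (\<lambda>h. 0)) (at z within U)" if "z \<in> U" for z
    proof -
      have "pd1 \<psi> z = 0" "pd2 \<psi> z = 0"
        using outside[of z] \<open>U \<subseteq> - \<Omega>\<close> that by auto
      then show ?thesis
        using has_derivative_pd[OF diff, of z] by (simp add: has_derivative_at_withinI)
    qed
    then have "\<psi> constant_on U"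
      using \<open>open U\<close> \<open>connected U\<close> continuous_on_subset[OF cont]
      by (intro has_derivative_zero_connected_constant_on[where K = "{}"]) auto
    then obtain k where k: "\<And>z. z \<in> U \<Longrightarrow> \<psi> z = k"
      by (auto simp: constant_on_def)
    have "laplacian \<psi> z + f (\<psi> z) = f k" if "z \<in> U" for z
      using laplacian_cong_open[OF \<open>open U\<close> that k] k[OF that] by (simp add: laplacian_const)
    then show ?thesis
      by (auto simp: constant_on_def)
  qed
  ultimately show ?thesis
    using continuous_constant_through_exterior_components[of "\<lambda>x. laplacian \<psi> x + f (\<psi> x)" \<Omega>]
      \<open>\<Omega> \<noteq> {}\<close> inside by blast
qed

theorem propositionA1:
  fixes v :: "real \<times> real \<Rightarrow> real \<times> real"
    and \<Omega> :: "(real \<times> real) set"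
    and \<psi>b :: "real \<times> real \<Rightarrow> real"
    and f :: "real \<Rightarrow> real"
    and J :: nat
  assumes euler: "stationary_euler v"
    and region: "open \<Omega>" "connected \<Omega>" "\<Omega> \<noteq> {}" "bounded \<Omega>"
    and bdry: "C1_boundary \<Omega>"
    and comps: "finite (components (frontier \<Omega>))" "card (components (frontier \<Omega>)) = J" "J \<ge> 1"
    and in_Omega: "\<forall>x\<in>\<Omega>. v x = grad_perp \<psi>b x"
    and outside: "\<forall>x. x \<notin> \<Omega> \<longrightarrow> v x = (0, 0)"
    and reg: "C2_closure \<Omega> \<psi>b"
    and f_cont: "continuous_on UNIV f"
    and pde: "\<forall>x\<in>\<Omega>. laplacian \<psi>b x + f (\<psi>b x) = 0"
  shows "\<exists>\<psi>. C2_on UNIV \<psi> \<and> (\<forall>x. v x = grad_perp \<psi> x)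
             \<and> (\<forall>x. laplacian \<psi> x + f (\<psi> x) = 0)"
proof -
  define v1 v2 where "v1 = (\<lambda>x. fst (v x))" and "v2 = (\<lambda>x. snd (v x))"
  have C1: "C1_on UNIV v1" "C1_on UNIV v2" and div: "\<And>x. pd1 v1 x + pd2 v2 x = 0"
    using euler unfolding stationary_euler_def v1_def v2_def by blast+
  have diff: "\<And>x. v1 differentiable (at x)" "\<And>x. v2 differentiable (at x)"
    and cont: "continuous_on UNIV (pd1 v1)"
    using C1 unfolding C1_on_def by blast+
  have vanish: "v1 x = 0 \<and> v2 x = 0" if "x \<notin> \<Omega>" for x
    using outside[rule_format, OF that] by (simp add: v1_def v2_def)
  have D\<psi>b: "(\<psi>b has_derivative (\<lambda>h. fst h * - v2 x + snd h * v1 x)) (at x)" if "x \<in> \<Omega>" for x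
  proof -
    have "\<psi>b differentiable (at x)"
      using reg that unfolding C2_closure_def C2_on_def C1_on_def by blast
    with in_Omega that show ?thesis
      using has_derivative_pd by (fastforce simp: grad_perp_def v1_def v2_def)
  qed
  obtain \<psi> where D: "\<And>x. (\<psi> has_derivative (\<lambda>h. fst h * - v2 x + snd h * v1 x)) (at x)"
    and eq: "\<And>x. x \<in> \<Omega> \<Longrightarrow> \<psi> x = \<psi>b x"
    using divergence_free_stream_function_extension[OF region(1,2,4) diff cont div vanish D\<psi>b]
    by blast
  have grad: "v x = grad_perp \<psi> x" for x
    using pd_eq_of_has_derivative[OF D] by (simp add: grad_perp_def v1_def v2_def)
  have C2: "C2_on UNIV \<psi>"
    using C2_on_UNIV_of_C1_gradient[OF D C1_on_uminus[OF C1(2)] C1(1)] .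
  have inside: "laplacian \<psi> x + f (\<psi> x) = 0" if "x \<in> \<Omega>" for x
    using pde laplacian_cong_open[OF region(1) that eq] eq that by simp
  have stagnant: "pd1 \<psi> x = 0 \<and> pd2 \<psi> x = 0" if "x \<notin> \<Omega>" for x
    using outside[rule_format, OF that] grad[of x] by (simp add: grad_perp_def)
  have "laplacian \<psi> x + f (\<psi> x) = 0" for x
    by (rule semilinear_equation_extends_to_stagnant_exterior[OF C2 f_cont region(3) inside stagnant])
  with C2 grad show ?thesis by blast
qed

end
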